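(* Let $\Phi:[a,b]\to\mathbb{R}$ be continuous and nowhere zero and let $x_0\in[a,b]$. For $n\ge0$, a fundamental set of solutions (basis of the solution space) of the equation $D^{(n+1)}y(x)=0$ of order $n+1$ is $\mathcal S_n=\{\mathcal Y_0(x_0,x),\dots,\mathcal Y_n(x_0,x)\}$ if $n$ is odd and $\widetilde{\mathcal S}_n=\{\widetilde{\mathcal Y}_0(x_0,x),\dots,\widetilde{\mathcal Y}_n(x_0,x)\}$ if $n$ is even. Moreover, a fundamental set of solutions of $\widetilde D^{(n+1)}y(x)=0$ of order $n+1$ is $\widetilde{\mathcal S}_n$ if $n$ is odd and $\mathcal S_n$ if $n$ is even.
   Context: For $x_0,x\in[a,b]$ the $\Phi$-power functions are defined recursively by $X^{(0)}(x_0,x)\equiv 1$, $\widetilde X^{(0)}(x_0,x)\equiv 1$ and, for $n\ge 1$, $$X^{(n)}(x_0,x)=n\int_{x_0}^x X^{(n-1)}(x_0,\xi)\,\big(\Phi(\xi)\big)^{(-1)^n}\,d\xi,\qquad \widetilde X^{(n)}(x_0,x)=n\int_{x_0}^x \widetilde X^{(n-1)}(x_0,\xi)\,\Big(\frac{1}{\Phi(\xi)}\Big)^{(-1)^n}\,d\xi.$$ For $n\ge0$, $\mathcal Y_n=\widetilde X^{(n)}$ if $n$ is odd and $\mathcal Y_n=X^{(n)}$ if $n$ is even; $\widetilde{\mathcal Y}_n=X^{(n)}$ if $n$ is odd and $\widetilde{\mathcal Y}_n=\widetilde X^{(n)}$ if $n$ is even. The $\Phi$-derivatives are $Dh=\Phi\,h'$,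 $\widetilde Dh=\frac1\Phi h'$, with $D^{(0)}h=\widetilde D^{(0)}h=h$, $D^{(k)}h=D(\widetilde D^{(k-1)}h)$, $\widetilde D^{(k)}h=\widetilde D(D^{(k-1)}h)$. In this part of the paper $\Phi$ is assumed real-valued. *)

theory Defs
  imports "HOL-Analysis.Analysis"
begin

definition sint :: "real \<Rightarrow> real \<Rightarrow> (real \<Rightarrow> real) \<Rightarrow> real" where
  "sint x0 x f = (if x0 \<le> x then integral {x0..x} f else - integral {x..x0} f)"

fun Xpow :: "(real \<Rightarrow> real) \<Rightarrow> real \<Rightarrow> nat \<Rightarrow> real \<Rightarrow> real" where
  "Xpow \<Phi> x0 0 x = 1"
| "Xpow \<Phi> x0 (Suc n) x = real (Suc n) *
     sint x0 x (\<lambda>\<xi>. Xpow \<Phi> x0 n \<xi> * (if odd (Suc n) then inverse (\<Phi> \<xi>) else \<Phi> \<xi>))"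

fun Xtpow :: "(real \<Rightarrow> real) \<Rightarrow> real \<Rightarrow> nat \<Rightarrow> real \<Rightarrow> real" where
  "Xtpow \<Phi> x0 0 x = 1"
| "Xtpow \<Phi> x0 (Suc n) x = real (Suc n) *
     sint x0 x (\<lambda>\<xi>. Xtpow \<Phi> x0 n \<xi> * (if odd (Suc n) then \<Phi> \<xi> else inverse (\<Phi> \<xi>)))"

definition Ypow :: "(real \<Rightarrow> real) \<Rightarrow> real \<Rightarrow> nat \<Rightarrow> real \<Rightarrow> real" where
  "Ypow \<Phi> x0 n = (if odd n then Xtpow \<Phi> x0 n else Xpow \<Phi> x0 n)"

definition Ytpow :: "(real \<Rightarrow> real) \<Rightarrow> real \<Rightarrow> nat \<Rightarrow> real \<Rightarrow> real" where
  "Ytpow \<Phi> x0 n = (if odd n then Xpow \<Phi> x0 n else Xtpow \<Phi> x0 n)"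

text \<open>Iterated Phi-derivatives on the set S (one-sided derivatives at endpoints).
  phiD \<Phi> S False k h = D^(k) h, phiD \<Phi> S True k h = tilde D^(k) h,
  with D h = \<Phi> h' and tilde D h = h' / \<Phi>.\<close>
fun phiD :: "(real \<Rightarrow> real) \<Rightarrow> real set \<Rightarrow> bool \<Rightarrow> nat \<Rightarrow> (real \<Rightarrow> real) \<Rightarrow> real \<Rightarrow> real" where
  "phiD \<Phi> S t 0 h = h"
| "phiD \<Phi> S t (Suc k) h = (\<lambda>x. (if t then inverse (\<Phi> x) else \<Phi> x) *
      vector_derivative (phiD \<Phi> S (\<not> t) k h) (at x within S))"

fun phiDiffable :: "(real \<Rightarrow> real) \<Rightarrow> real set \<Rightarrow> bool \<Rightarrow> nat \<Rightarrow> (real \<Rightarrow> real) \<Rightarrow> bool" where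
  "phiDiffable \<Phi> S t 0 h = True"
| "phiDiffable \<Phi> S t (Suc k) h = (phiDiffable \<Phi> S (\<not> t) k h \<and>
      (\<forall>x\<in>S. phiD \<Phi> S (\<not> t) k h differentiable (at x within S)))"

definition phi_solution :: "(real \<Rightarrow> real) \<Rightarrow> real set \<Rightarrow> bool \<Rightarrow> nat \<Rightarrow> (real \<Rightarrow> real) \<Rightarrow> bool" where
  "phi_solution \<Phi> S t m y \<longleftrightarrow> phiDiffable \<Phi> S t m y \<and> (\<forall>x\<in>S. phiD \<Phi> S t m y x = 0)"

definition fundamental_set :: "real set \<Rightarrow> ((real \<Rightarrow> real) \<Rightarrow> bool) \<Rightarrow> nat \<Rightarrow> (nat \<Rightarrow> real \<Rightarrow> real) \<Rightarrow> bool" where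
  "fundamental_set S sol n Y \<longleftrightarrow>
     (\<forall>i\<le>n. sol (Y i)) \<and>
     (\<forall>c::nat \<Rightarrow> real. (\<forall>x\<in>S. (\<Sum>i\<le>n. c i * Y i x) = 0) \<longrightarrow> (\<forall>i\<le>n. c i = 0)) \<and>
     (\<forall>y. sol y \<longrightarrow> (\<exists>c::nat \<Rightarrow> real. \<forall>x\<in>S. y x = (\<Sum>i\<le>n. c i * Y i x)))"

end

theory Submission
  imports Defs
begin

text \<open>Write \<open>w\<^sub>t\<close> for \<open>1/\<Phi>\<close> if \<open>t\<close> and for \<open>\<Phi>\<close> otherwise, so that the last operator
  applied in \<open>D\<^sup>(\<^sup>k\<^sup>)\<close> resp. \<open>D\<^sup>~\<^sup>(\<^sup>k\<^sup>)\<close> is \<open>h \<mapsto> w\<^sub>t h'\<close>. By the fundamental theorem of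
  calculus, \<open>w\<^sub>t\<close> times the derivative of the \<open>(i+1)\<close>-st \<open>\<Phi>\<close>-power of one kind is \<open>i+1\<close>
  times the \<open>i\<close>-th power of the other kind, because \<open>w\<^sub>t w\<^sub>\<not>\<^sub>t = 1\<close>. Iterating, the
  \<open>\<Phi>\<close>-derivative of order \<open>k\<close> of the \<open>i\<close>-th power is \<open>i(i-1)\<cdots>(i-k+1)\<close> times a power of
  order \<open>i-k\<close>: it vanishes for \<open>k > i\<close> and is the nonzero constant \<open>i!\<close> for \<open>k = i\<close>. Hence
  the powers of order at most \<open>n\<close> solve the equation of order \<open>n+1\<close>, and applying the
  operator of order \<open>n\<close> to a vanishing combination isolates its last coefficient.
  Conversely, the \<open>\<Phi>\<close>-derivative of order \<open>n\<close> of a solution has zero derivative, so it is a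
  constant \<open>C\<close>, and subtracting \<open>C/n!\<close> times the \<open>n\<close>-th power lowers the order by one.\<close>

lemma has_vector_derivative_sint:
  assumes "continuous_on {a..b} f" "x0 \<in> {a..b}" "x \<in> {a..b}"
  shows "((\<lambda>x. sint x0 x f) has_vector_derivative f x) (at x within {a..b})"
proof -
  have integrable: "f integrable_on {a..u}" if "u \<in> {a..b}" for u
    using integrable_continuous_real[OF assms(1)] integrable_subinterval_real that by fastforce
  have sint_eq: "sint x0 u f = integral {a..u} f - integral {a..x0} f" if u: "u \<in> {a..b}" for u
  proof (cases "x0 \<le> u")
    case True
    have "integral {a..x0} f + integral {x0..u} f = integral {a..u} f"
      using Henstock_Kurzweil_Integration.integral_combine[of a x0 u f] True integrable[OF u] assms(2)
      by auto
    then show ?thesis using True by (simp add: sint_def)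
  next
    case False
    have "integral {a..u} f + integral {u..x0} f = integral {a..x0} f"
      using Henstock_Kurzweil_Integration.integral_combine[of a u x0 f] False integrable[OF assms(2)] u
      by auto
    then show ?thesis using False by (simp add: sint_def)
  qed
  have "((\<lambda>u. integral {a..u} f - integral {a..x0} f) has_vector_derivative f x) (at x within {a..b})"
    using has_vector_derivative_diff[OF integral_has_vector_derivative[OF assms(1,3)]
        has_vector_derivative_const] by simp
  then show ?thesis
    by (rule has_vector_derivative_transform[OF assms(3), rotated]) (simp add: sint_eq)
qed

lemma phiD_cong:
  assumes "\<forall>x\<in>S. f x = g x"
  shows "(phiDiffable \<Phi> S t k f \<longleftrightarrow> phiDiffable \<Phi> S t k g) \<and>
         (\<forall>x\<in>S. phiD \<Phi> S t k f x = phiD \<Phi> S t k g x)"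
proof (induction k arbitrary: t)
  case 0
  then show ?case using assms by simp
next
  case (Suc k)
  have eq: "\<forall>y\<in>S. phiD \<Phi> S (\<not> t) k f y = phiD \<Phi> S (\<not> t) k g y"
    using Suc by blast
  have hvd: "(phiD \<Phi> S (\<not> t) k f has_vector_derivative d) (at x within S) \<longleftrightarrow>
             (phiD \<Phi> S (\<not> t) k g has_vector_derivative d) (at x within S)" if "x \<in> S" for x d
    using has_vector_derivative_transform[OF that] eq by metis
  then have "phiD \<Phi> S (\<not> t) k f differentiable (at x within S) \<longleftrightarrow>
             phiD \<Phi> S (\<not> t) k g differentiable (at x within S)" if "x \<in> S" for x
    using that vector_derivative_works differentiableI_vector by metis
  moreover have "vector_derivative (phiD \<Phi> S (\<not> t) k f) (at x within S) =
                 vector_derivative (phiD \<Phi> S (\<not> t) k g) (at x within S)" if "x \<in> S" for x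
    unfolding vector_derivative_def using hvd[OF that] by simp
  ultimately show ?case using Suc[of "\<not> t"] by auto
qed

definition falling_fact :: "nat \<Rightarrow> nat \<Rightarrow> real" where
  "falling_fact k i = (\<Prod>j<k. real i - real j)"

lemma falling_fact_0 [simp]: "falling_fact 0 i = 1"
  by (simp add: falling_fact_def)

lemma falling_fact_Suc: "falling_fact (Suc k) i = falling_fact k i * (real i - real k)"
  by (simp add: falling_fact_def)

lemma falling_fact_eq_0: "i < k \<Longrightarrow> falling_fact k i = 0"
  unfolding falling_fact_def by (rule prod_zero) auto

lemma falling_fact_self_nonzero: "falling_fact k k \<noteq> 0"
  by (simp add: falling_fact_def)

locale phi_interval =
  fixes \<Phi> :: "real \<Rightarrow> real" and a b x0 :: real
  assumes a_less_b: "a < b"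
    and continuous_Phi: "continuous_on {a..b} \<Phi>"
    and Phi_nonzero: "\<forall>x\<in>{a..b}. \<Phi> x \<noteq> 0"
    and x0_in: "x0 \<in> {a..b}"
begin

definition weight :: "bool \<Rightarrow> real \<Rightarrow> real" where
  "weight t x = (if t then inverse (\<Phi> x) else \<Phi> x)"

lemma weight_continuous: "continuous_on {a..b} (weight t)"
  using continuous_Phi Phi_nonzero unfolding weight_def by (cases t) (auto intro!: continuous_on_inverse)

lemma weight_nonzero: "x \<in> {a..b} \<Longrightarrow> weight t x \<noteq> 0"
  using Phi_nonzero unfolding weight_def by auto

lemma weight_mult_weight_Not: "x \<in> {a..b} \<Longrightarrow> weight t x * weight (\<not> t) x = 1"
  using Phi_nonzero unfolding weight_def by auto

lemma phiD_Suc_weight: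
  "phiD \<Phi> {a..b} t (Suc k) h x = weight t x * vector_derivative (phiD \<Phi> {a..b} (\<not> t) k h) (at x within {a..b})"
  by (simp add: weight_def)

definition Yfamily :: "bool \<Rightarrow> nat \<Rightarrow> real \<Rightarrow> real" where
  "Yfamily u i = (if u then Ypow \<Phi> x0 i else Ytpow \<Phi> x0 i)"

lemma Yfamily_0: "Yfamily u 0 = (\<lambda>x. 1)"
  by (auto simp: Yfamily_def Ypow_def Ytpow_def fun_eq_iff)

lemma Yfamily_Suc:
  "Yfamily u (Suc i) = (\<lambda>x. real (Suc i) * sint x0 x (\<lambda>\<xi>. Yfamily (\<not> u) i \<xi> * weight (\<not> u) \<xi>))"
  by (cases u; cases "even i")
    (simp_all add: Yfamily_def Ypow_def Ytpow_def weight_def fun_eq_iff del: of_nat_Suc)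

lemma has_vector_derivative_Yfamily_Suc_if_continuous:
  assumes "continuous_on {a..b} (Yfamily (\<not> u) i)" "x \<in> {a..b}"
  shows "(Yfamily u (Suc i) has_vector_derivative
           real (Suc i) * (Yfamily (\<not> u) i x * weight (\<not> u) x)) (at x within {a..b})"
  unfolding Yfamily_Suc
  by (intro has_vector_derivative_mult_right has_vector_derivative_sint continuous_on_mult
      assms weight_continuous x0_in)

lemma Yfamily_continuous: "continuous_on {a..b} (Yfamily u i)"
proof (induction i arbitrary: u)
  case 0
  then show ?case by (simp add: Yfamily_0)
next
  case (Suc i)
  then show ?case
    unfolding continuous_on_eq_continuous_within
    using has_vector_derivative_Yfamily_Suc_if_continuous[OF Suc[of "\<not> u"]] has_vector_derivative_continuous
    by blast
qed

lemmas has_vector_derivative_Yfamily_Suc =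
  has_vector_derivative_Yfamily_Suc_if_continuous[OF Yfamily_continuous]

lemma phiD_SucI:
  assumes "phiDiffable \<Phi> {a..b} (\<not> t) k h"
    and "\<forall>x\<in>{a..b}. phiD \<Phi> {a..b} (\<not> t) k h x = g x"
    and "\<And>x. x \<in> {a..b} \<Longrightarrow> (g has_vector_derivative g' x) (at x within {a..b})"
  shows "phiDiffable \<Phi> {a..b} t (Suc k) h \<and>
         (\<forall>x\<in>{a..b}. phiD \<Phi> {a..b} t (Suc k) h x = weight t x * g' x)"
proof -
  have deriv: "(phiD \<Phi> {a..b} (\<not> t) k h has_vector_derivative g' x) (at x within {a..b})"
    if "x \<in> {a..b}" for x
    using has_vector_derivative_transform[OF that _ assms(3)[OF that]] assms(2) that by auto
  have "phiD \<Phi> {a..b} (\<not> t) k h differentiable (at x within {a..b})" if "x \<in> {a..b}" for x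
    using differentiableI_vector[OF deriv[OF that]] .
  moreover have "vector_derivative (phiD \<Phi> {a..b} (\<not> t) k h) (at x within {a..b}) = g' x"
    if "x \<in> {a..b}" for x
    by (rule vector_derivative_within_cbox[of a b, unfolded cbox_interval, OF a_less_b that deriv[OF that]])
  ultimately show ?thesis
    using assms(1) by (simp add: phiD_Suc_weight del: phiD.simps(2))
qed

lemma phiD_sum:
  assumes "\<And>i. i \<in> I \<Longrightarrow> phiDiffable \<Phi> {a..b} t k (g i)"
  shows "phiDiffable \<Phi> {a..b} t k (\<lambda>x. \<Sum>i\<in>I. c i * g i x) \<and>
    (\<forall>x\<in>{a..b}. phiD \<Phi> {a..b} t k (\<lambda>x. \<Sum>i\<in>I. c i * g i x) x =
                 (\<Sum>i\<in>I. c i * phiD \<Phi> {a..b} t k (g i) x))"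
  using assms
proof (induction k arbitrary: t)
  case 0
  then show ?case by simp
next
  case (Suc k)
  define g' where "g' i x = vector_derivative (phiD \<Phi> {a..b} (\<not> t) k (g i)) (at x within {a..b})" for i x
  have "(phiD \<Phi> {a..b} (\<not> t) k (g i) has_vector_derivative g' i x) (at x within {a..b})"
    if "i \<in> I" "x \<in> {a..b}" for i x
    using Suc.prems that unfolding g'_def by (auto simp: vector_derivative_works[symmetric])
  then have "((\<lambda>x. \<Sum>i\<in>I. c i * phiD \<Phi> {a..b} (\<not> t) k (g i) x) has_vector_derivative
        (\<Sum>i\<in>I. c i * g' i x)) (at x within {a..b})" if "x \<in> {a..b}" for x
    using that by (intro has_vector_derivative_sum has_vector_derivative_mult_right) auto
  moreover note Suc.IH[of "\<not> t"] Suc.prems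
  ultimately have "phiDiffable \<Phi> {a..b} t (Suc k) (\<lambda>x. \<Sum>i\<in>I. c i * g i x) \<and>
    (\<forall>x\<in>{a..b}. phiD \<Phi> {a..b} t (Suc k) (\<lambda>x. \<Sum>i\<in>I. c i * g i x) x =
                 weight t x * (\<Sum>i\<in>I. c i * g' i x))"
    by (intro phiD_SucI) auto
  then show ?case
    by (auto simp: g'_def phiD_Suc_weight sum_distrib_left mult.left_commute simp del: phiD.simps)
qed

lemma phiD_diff:
  assumes "phiDiffable \<Phi> {a..b} t k f" "phiDiffable \<Phi> {a..b} t k g"
  shows "phiDiffable \<Phi> {a..b} t k (\<lambda>x. f x - d * g x) \<and>
    (\<forall>x\<in>{a..b}. phiD \<Phi> {a..b} t k (\<lambda>x. f x - d * g x) x =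
                 phiD \<Phi> {a..b} t k f x - d * phiD \<Phi> {a..b} t k g x)"
proof -
  have "(\<lambda>x. f x - d * g x) = (\<lambda>x. \<Sum>j\<in>{True, False}. (if j then 1 else - d) * (if j then f else g) x)"
    by simp
  then show ?thesis
    using phiD_sum[of "{True, False}" t k "\<lambda>j. if j then f else g" "\<lambda>j. if j then 1 else - d"] assms
    by simp
qed

lemma phiD_Yfamily:
  assumes "u = (t = odd k)"
  shows "phiDiffable \<Phi> {a..b} t k (Yfamily u i) \<and>
    (\<forall>x\<in>{a..b}. phiD \<Phi> {a..b} t k (Yfamily u i) x = falling_fact k i * Yfamily (\<not> t) (i - k) x)"
  using assms
proof (induction k arbitrary: t)
  case 0
  then show ?case by simp
next
  case (Suc k)
  have IH: "phiDiffable \<Phi> {a..b} (\<not> t) k (Yfamily u i)"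
    "\<forall>x\<in>{a..b}. phiD \<Phi> {a..b} (\<not> t) k (Yfamily u i) x = falling_fact k i * Yfamily t (i - k) x"
    using Suc.IH[of "\<not> t"] Suc.prems by simp_all
  show ?case
  proof (cases "k < i")
    case True
    define m where "m = i - Suc k"
    have m: "i - k = Suc m" "real i - real k = real (Suc m)"
      using True by (simp_all add: m_def Suc_diff_Suc of_nat_diff)
    have "((\<lambda>x. falling_fact k i * Yfamily t (Suc m) x) has_vector_derivative
        falling_fact k i * (real (Suc m) * (Yfamily (\<not> t) m x * weight (\<not> t) x))) (at x within {a..b})"
      if "x \<in> {a..b}" for x
      by (intro has_vector_derivative_mult_right has_vector_derivative_Yfamily_Suc that)
    from phiD_SucI[OF IH(1) _ this] IH(2)
    have "phiDiffable \<Phi> {a..b} t (Suc k) (Yfamily u i) \<and>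
      (\<forall>x\<in>{a..b}. phiD \<Phi> {a..b} t (Suc k) (Yfamily u i) x =
         weight t x * (falling_fact k i * (real (Suc m) * (Yfamily (\<not> t) m x * weight (\<not> t) x))))"
      by (simp add: m(1) del: phiD.simps)
    moreover have "weight t x * (falling_fact k i * (real (Suc m) * (Yfamily (\<not> t) m x * weight (\<not> t) x)))
        = falling_fact (Suc k) i * Yfamily (\<not> t) m x" if "x \<in> {a..b}" for x
      using weight_mult_weight_Not[OF that, of t]
      by (simp add: falling_fact_Suc m(2) del: of_nat_Suc)
    ultimately show ?thesis by (simp add: m_def del: phiD.simps)
  next
    case False
    then have "\<forall>x\<in>{a..b}. phiD \<Phi> {a..b} (\<not> t) k (Yfamily u i) x = falling_fact k i"
      using IH(2) by (simp add: Yfamily_0)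
    from phiD_SucI[OF IH(1) this has_vector_derivative_const]
    show ?thesis
      using falling_fact_eq_0[of i "Suc k"] False by (simp del: phiD.simps)
  qed
qed

lemma phiD_Yfamily_self:
  assumes "u = (t = odd k)" "x \<in> {a..b}"
  shows "phiD \<Phi> {a..b} t k (Yfamily u k) x = falling_fact k k"
  using phiD_Yfamily[OF assms(1), of k] assms(2) by (simp add: Yfamily_0)

lemma phiD_Yfamily_vanishes:
  assumes "u = (t = odd k)" "i < k" "x \<in> {a..b}"
  shows "phiD \<Phi> {a..b} t k (Yfamily u i) x = 0"
  using phiD_Yfamily[OF assms(1), of i] falling_fact_eq_0[OF assms(2)] assms(3) by simp

lemma phiD_constant_if_phiD_Suc_zero:
  assumes "phiDiffable \<Phi> {a..b} t (Suc k) y" "\<forall>x\<in>{a..b}. phiD \<Phi> {a..b} t (Suc k) y x = 0"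
  obtains C where "\<forall>x\<in>{a..b}. phiD \<Phi> {a..b} (\<not> t) k y x = C"
proof -
  have "(phiD \<Phi> {a..b} (\<not> t) k y has_field_derivative 0) (at x within {a..b})"
    if x: "x \<in> {a..b}" for x
  proof -
    have "weight t x * vector_derivative (phiD \<Phi> {a..b} (\<not> t) k y) (at x within {a..b}) = 0"
      using assms(2) x by (simp add: phiD_Suc_weight del: phiD.simps)
    then have "vector_derivative (phiD \<Phi> {a..b} (\<not> t) k y) (at x within {a..b}) = 0"
      using weight_nonzero[OF x] by simp
    moreover have "phiD \<Phi> {a..b} (\<not> t) k y differentiable (at x within {a..b})"
      using assms(1) x by simp
    ultimately show ?thesis
      by (metis vector_derivative_works has_real_derivative_iff_has_vector_derivative)
  qed
  then show ?thesis
    using has_field_derivative_zero_constant[of "{a..b}"] that by auto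
qed

lemma phi_solution_in_span:
  assumes "phiDiffable \<Phi> {a..b} t m y" "\<forall>x\<in>{a..b}. phiD \<Phi> {a..b} t m y x = 0"
  shows "\<exists>c. \<forall>x\<in>{a..b}. y x = (\<Sum>i<m. c i * Yfamily (t = odd m) i x)"
  using assms
proof (induction m arbitrary: t y)
  case 0
  then show ?case by simp
next
  case (Suc k)
  define u where "u = (t = odd (Suc k))"
  then have u: "u = ((\<not> t) = odd k)" by simp
  obtain C where C: "\<forall>x\<in>{a..b}. phiD \<Phi> {a..b} (\<not> t) k y x = C"
    using phiD_constant_if_phiD_Suc_zero[OF Suc.prems] .
  define d where "d = C / falling_fact k k"
  have "phiDiffable \<Phi> {a..b} (\<not> t) k y" using Suc.prems(1) by simp
  from phiD_diff[OF this conjunct1[OF phiD_Yfamily[OF u]], of d]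
  have w: "phiDiffable \<Phi> {a..b} (\<not> t) k (\<lambda>x. y x - d * Yfamily u k x)"
    "\<forall>x\<in>{a..b}. phiD \<Phi> {a..b} (\<not> t) k (\<lambda>x. y x - d * Yfamily u k x) x = 0"
    using C phiD_Yfamily_self[OF u] falling_fact_self_nonzero[of k] by (simp_all add: d_def)
  obtain c where c: "\<forall>x\<in>{a..b}. y x - d * Yfamily u k x = (\<Sum>i<k. c i * Yfamily u i x)"
    using Suc.IH[OF w] u by auto
  have "\<forall>x\<in>{a..b}. y x = (\<Sum>i<Suc k. (c(k := d)) i * Yfamily u i x)"
    using c by (simp add: algebra_simps)
  then show ?case unfolding u_def by blast
qed

lemma Yfamily_lincomb_zero_last_coeff:
  assumes "\<forall>x\<in>{a..b}. (\<Sum>i\<le>n. c i * Yfamily u i x) = 0"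
  shows "c n = 0"
proof -
  define t where "t = (u = odd n)"
  then have u: "u = (t = odd n)" by auto
  have a: "a \<in> {a..b}" using a_less_b by simp
  have diffable: "phiDiffable \<Phi> {a..b} t n (Yfamily u i)" for i
    using phiD_Yfamily[OF u] by blast
  have vanishing: "\<forall>x\<in>{a..b}. (\<Sum>i\<le>n. c i * Yfamily u i x) = (\<Sum>i\<in>{}. c i * Yfamily u i x)"
    using assms by simp
  have "(\<Sum>i\<le>n. c i * phiD \<Phi> {a..b} t n (Yfamily u i) a) =
        phiD \<Phi> {a..b} t n (\<lambda>x. \<Sum>i\<le>n. c i * Yfamily u i x) a"
    using conjunct2[OF phiD_sum[of "{..n}" t n "Yfamily u" c, OF diffable]] a by simp
  also have "\<dots> = phiD \<Phi> {a..b} t n (\<lambda>x. \<Sum>i\<in>{}. c i * Yfamily u i x) a"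
    using conjunct2[OF phiD_cong[OF vanishing]] a by blast
  also have "\<dots> = 0"
    using conjunct2[OF phiD_sum[of "{}" t n "Yfamily u" c, OF diffable]] a by simp
  finally have "(\<Sum>i\<le>n. c i * phiD \<Phi> {a..b} t n (Yfamily u i) a) = 0" .
  moreover have "(\<Sum>i\<le>n. c i * phiD \<Phi> {a..b} t n (Yfamily u i) a) = c n * falling_fact n n"
    using phiD_Yfamily_vanishes[OF u _ a] phiD_Yfamily_self[OF u a]
    by (simp add: lessThan_Suc_atMost[symmetric])
  ultimately show ?thesis
    using falling_fact_self_nonzero[of n] by simp
qed

lemma Yfamily_linear_independent:
  "\<forall>x\<in>{a..b}. (\<Sum>i\<le>n. c i * Yfamily u i x) = 0 \<Longrightarrow> \<forall>i\<le>n. c i = 0"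
proof (induction n)
  case 0
  then show ?case using Yfamily_lincomb_zero_last_coeff[OF 0] by simp
next
  case (Suc n)
  have "c (Suc n) = 0"
    using Suc.prems by (rule Yfamily_lincomb_zero_last_coeff)
  with Suc show ?case by (auto simp: le_Suc_eq)
qed

lemma fundamental_set_Yfamily:
  "fundamental_set {a..b} (phi_solution \<Phi> {a..b} t (Suc n)) n (Yfamily (t = odd (Suc n)))"
proof -
  have "phi_solution \<Phi> {a..b} t (Suc n) (Yfamily (t = odd (Suc n)) i)" if "i \<le> n" for i
    unfolding phi_solution_def
    by (intro conjI ballI conjunct1[OF phiD_Yfamily] phiD_Yfamily_vanishes) (use that in auto)
  moreover have "\<exists>c. \<forall>x\<in>{a..b}. y x = (\<Sum>i\<le>n. c i * Yfamily (t = odd (Suc n)) i x)"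
    if "phi_solution \<Phi> {a..b} t (Suc n) y" for y
    using phi_solution_in_span[of t "Suc n" y, unfolded lessThan_Suc_atMost] that
    unfolding phi_solution_def by blast
  ultimately show ?thesis
    unfolding fundamental_set_def using Yfamily_linear_independent by blast
qed

end

theorem proposition3:
  fixes \<Phi> :: "real \<Rightarrow> real" and a b x0 :: real and n :: nat
  assumes "a < b"
    and "continuous_on {a..b} \<Phi>"
    and "\<forall>x\<in>{a..b}. \<Phi> x \<noteq> 0"
    and "x0 \<in> {a..b}"
  shows "fundamental_set {a..b} (phi_solution \<Phi> {a..b} False (Suc n)) n
           (\<lambda>i. if odd n then Ypow \<Phi> x0 i else Ytpow \<Phi> x0 i)
       \<and> fundamental_set {a..b} (phi_solution \<Phi> {a..b} True (Suc n)) n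
           (\<lambda>i. if odd n then Ytpow \<Phi> x0 i else Ypow \<Phi> x0 i)"
proof -
  interpret phi_interval \<Phi> a b x0
    using assms by unfold_locales auto
  have "Yfamily (False = odd (Suc n)) = (\<lambda>i. if odd n then Ypow \<Phi> x0 i else Ytpow \<Phi> x0 i)"
    "Yfamily (True = odd (Suc n)) = (\<lambda>i. if odd n then Ytpow \<Phi> x0 i else Ypow \<Phi> x0 i)"
    by (auto simp: Yfamily_def fun_eq_iff)
  then show ?thesis
    using fundamental_set_Yfamily[of False n] fundamental_set_Yfamily[of True n] by simp
qed

end
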